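(* Let $G$ be a finite graph with vertices $v_1,\ldots,v_n$, and let $H$ be obtained from $G$ by substituting complete graphs for the vertices of $G$; that is, $V(H)=C_1\cup\cdots\cup C_n$ is a partition into non-empty sets, each $C_i$ induces a complete graph in $H$, and for distinct $i,j$ and $x\in C_i$, $y\in C_j$ we have $xy\in E(H)$ if and only if $v_iv_j\in E(G)$. Then there is a one-to-one correspondence between the minimal chordal completions of $G$ and the minimal chordal completions of $H$.
   Context: A graph is chordal if it has no induced cycle of length at least four. A chordal completion of a graph $G=(V,E)$ is a chordal graph $G'=(V,E')$ with $E\subseteq E'$; it is minimal if no proper subgraph of $G'$ (on vertex set $V$) is a chordal completion of $G$. *)

theory Defs
  imports Main
begin

definition graph :: "'a set \<Rightarrow> 'a set set \<Rightarrow> bool" where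
  "graph V E \<longleftrightarrow> finite V \<and> E \<subseteq> {{x, y} | x y. x \<in> V \<and> y \<in> V \<and> x \<noteq> y}"

definition induced_cycle :: "'a set \<Rightarrow> 'a set set \<Rightarrow> 'a list \<Rightarrow> bool" where
  "induced_cycle V E xs \<longleftrightarrow> length xs \<ge> 4 \<and> distinct xs \<and> set xs \<subseteq> V \<and>
     (\<forall>i < length xs. \<forall>j < length xs. i \<noteq> j \<longrightarrow>
        ({xs ! i, xs ! j} \<in> E \<longleftrightarrow>
           (j = Suc i mod length xs \<or> i = Suc j mod length xs)))"

definition chordal :: "'a set \<Rightarrow> 'a set set \<Rightarrow> bool" where
  "chordal V E \<longleftrightarrow> \<not> (\<exists>xs. induced_cycle V E xs)"

definition chordal_completion :: "'a set \<Rightarrow> 'a set set \<Rightarrow> 'a set set \<Rightarrow> bool" where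
  "chordal_completion V E E' \<longleftrightarrow> graph V E' \<and> E \<subseteq> E' \<and> chordal V E'"

definition minimal_chordal_completion :: "'a set \<Rightarrow> 'a set set \<Rightarrow> 'a set set \<Rightarrow> bool" where
  "minimal_chordal_completion V E E' \<longleftrightarrow> chordal_completion V E E' \<and>
     \<not> (\<exists>E''. chordal_completion V E E'' \<and> E'' \<subset> E')"

end

theory Submission
  imports Defs
begin

(*
  Lifting a completion A of G to the graph on W whose edges are F together with all pairs
  from classes adjacent in A, and projecting a completion B of H to the graph joining u and v
  when every pair of C u \<times> C v lies in B, are inverse bijections between minimal
  completions. Lifting preserves chordality: two vertices of one class are adjacent twins,
  which an induced cycle of length at least four cannot contain, so an induced cycle of the
  lift projects to one of A. Projecting preserves chordality by a shortest path argument in B.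
  Since the lift of the projection of B is contained in B and lifting reflects inclusion,
  minimality transfers in both directions.
*)

lemma not_chordalI:
  assumes "4 \<le> L" and "inj_on f {..<L}" and "\<forall>i<L. f i \<in> V"
    and adj: "\<forall>i j. i < j \<and> j < L \<longrightarrow> ({f i, f j} \<in> E \<longleftrightarrow> j = Suc i \<or> (i = 0 \<and> j = L - 1))"
  shows "\<not> chordal V E"
proof -
  have "induced_cycle V E (map f [0..<L])"
    unfolding induced_cycle_def
  proof (intro conjI allI impI)
    show "4 \<le> length (map f [0..<L])" "set (map f [0..<L]) \<subseteq> V"
      using assms(1,3) by auto
    show "distinct (map f [0..<L])"
      using assms(2) by (simp add: distinct_map lessThan_atLeast0)
    fix i j assume "i < length (map f [0..<L])" "j < length (map f [0..<L])" "i \<noteq> j"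
    then have "i < L" "j < L" "i < j \<or> j < i" by auto
    then show "({map f [0..<L] ! i, map f [0..<L] ! j} \<in> E) =
        (j = Suc i mod length (map f [0..<L]) \<or> i = Suc j mod length (map f [0..<L]))"
      using adj[rule_format, of i j] adj[rule_format, of j i]
      by (auto simp: mod_Suc insert_commute)
  qed
  then show ?thesis unfolding chordal_def by blast
qed

definition induced_path :: "'a set set \<Rightarrow> (nat \<Rightarrow> 'a) \<Rightarrow> nat \<Rightarrow> bool" where
  "induced_path E p n \<longleftrightarrow> inj_on p {..n} \<and> (\<forall>i<n. {p i, p (Suc i)} \<in> E) \<and>
     (\<forall>i j. Suc i < j \<and> j \<le> n \<longrightarrow> {p i, p j} \<notin> E)"

lemma induced_path_segment:
  assumes "induced_path E p n" and "a \<le> b" and "b \<le> n"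
  shows "induced_path E (\<lambda>i. p (a + i)) (b - a)"
proof -
  have "inj_on p ((+) a ` {..b - a})"
    using assms by (auto simp: induced_path_def intro: inj_on_subset)
  then have "inj_on (\<lambda>i. p (a + i)) {..b - a}"
    using comp_inj_on[of "(+) a"] by (simp add: o_def)
  then show ?thesis
    using assms by (auto simp: induced_path_def)
qed

lemma not_chordal_apex:
  assumes p: "induced_path E p n" and "2 \<le> n" and pV: "p ` {..n} \<subseteq> V" and "y \<in> V"
    and "y \<notin> p ` {..n}" and "{y, p 0} \<in> E" and "{y, p n} \<in> E"
    and "\<forall>i. 0 < i \<and> i < n \<longrightarrow> {y, p i} \<notin> E"
  shows "\<not> chordal V E"
proof (rule not_chordalI)
  define f where "f i = (if i = 0 then y else p (i - 1))" for i
  show "4 \<le> n + 2" using assms(2) by simp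
  show "inj_on f {..<n + 2}"
  proof (rule inj_onI)
    fix i j assume "i \<in> {..<n + 2}" "j \<in> {..<n + 2}" "f i = f j"
    moreover have "p (k - 1) \<noteq> y" if "0 < k" "k < n + 2" for k
      using assms(5) that by force
    moreover have "i - 1 = j - 1" if "0 < i" "0 < j" "i < n + 2" "j < n + 2" "p (i - 1) = p (j - 1)"
      using p that unfolding induced_path_def by (auto dest: inj_onD)
    ultimately show "i = j"
      unfolding f_def by (cases "i = 0"; cases "j = 0") auto
  qed
  show "\<forall>i<n + 2. f i \<in> V"
    using pV assms(4) by (auto simp: f_def)
  show "\<forall>i j. i < j \<and> j < n + 2 \<longrightarrow> ({f i, f j} \<in> E \<longleftrightarrow> j = Suc i \<or> (i = 0 \<and> j = n + 2 - 1))"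
  proof (intro allI impI)
    fix i j assume ij: "i < j \<and> j < n + 2"
    show "{f i, f j} \<in> E \<longleftrightarrow> j = Suc i \<or> (i = 0 \<and> j = n + 2 - 1)"
    proof (cases "i = 0")
      case True
      then show ?thesis
        using assms(6-8) ij by (cases "j = 1"; cases "j = n + 1") (auto simp: f_def)
    next
      case False
      then obtain k where "i = Suc k" using not0_implies_Suc by blast
      then show ?thesis
        using p ij unfolding induced_path_def f_def by (cases "j = Suc i") (auto simp: less_diff_conv)
    qed
  qed
qed

text \<open>Otherwise the neighbours of y nearest to p i on either side close an induced cycle.\<close>
lemma chordal_apex_adjacent:
  assumes "chordal V E" and p: "induced_path E p n" and pV: "p ` {..n} \<subseteq> V"
    and "y \<in> V" and y: "y \<notin> p ` {..n}" and "{y, p 0} \<in> E" and "{y, p n} \<in> E"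
    and "i \<le> n"
  shows "{y, p i} \<in> E"
proof (rule ccontr)
  assume yi: "{y, p i} \<notin> E"
  define N where "N = {l. l \<le> n \<and> {y, p l} \<in> E}"
  define a where "a = Max {l \<in> N. l < i}"
  define b where "b = Min {l \<in> N. i < l}"
  have ne: "0 \<in> {l \<in> N. l < i}" "n \<in> {l \<in> N. i < l}"
    using assms(6-8) yi by (auto simp: N_def intro: gr0I le_neq_implies_less)
  have fin: "finite {l \<in> N. l < i}" "finite {l \<in> N. i < l}"
    by (auto simp: N_def)
  have a: "a \<in> N" "a < i" "\<And>l. l \<in> N \<Longrightarrow> l < i \<Longrightarrow> l \<le> a"
    using Max_in[OF fin(1)] Max_ge[OF fin(1)] ne(1) unfolding a_def by blast+
  have b: "b \<in> N" "i < b" "\<And>l. l \<in> N \<Longrightarrow> i < l \<Longrightarrow> b \<le> l"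
    using Min_in[OF fin(2)] Min_le[OF fin(2)] ne(2) unfolding b_def by blast+
  have gap: "{y, p l} \<notin> E" if "a < l" "l < b" for l
  proof
    assume "{y, p l} \<in> E"
    moreover have "l \<le> n" using that b(1) by (simp add: N_def)
    ultimately have "l \<in> N" by (simp add: N_def)
    then show False
      using that a(3)[of l] b(3)[of l] yi by (cases "l < i"; cases "i < l") (auto simp: N_def)
  qed
  have "b \<le> n" using b(1) by (simp add: N_def)
  then have seg: "(\<lambda>l. p (a + l)) ` {..b - a} \<subseteq> p ` {..n}"
    using a(2) b(2) by (auto intro!: imageI)
  have "\<not> chordal V E"
  proof (rule not_chordal_apex)
    show "induced_path E (\<lambda>l. p (a + l)) (b - a)"
      using induced_path_segment[OF p] a(2) b(2) \<open>b \<le> n\<close> by simp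
    show "2 \<le> b - a" using a(2) b(2) by simp
    show "(\<lambda>l. p (a + l)) ` {..b - a} \<subseteq> V" "y \<notin> (\<lambda>l. p (a + l)) ` {..b - a}"
      using pV y seg by auto
    show "{y, p (a + 0)} \<in> E" "{y, p (a + (b - a))} \<in> E"
      using a(1) b(1) a(2) b(2) by (auto simp: N_def)
    show "\<forall>l. 0 < l \<and> l < b - a \<longrightarrow> {y, p (a + l)} \<notin> E"
      using gap by (simp add: less_diff_conv)
  qed (use assms(4) in simp)
  then show False using assms(1) by simp
qed

definition walk :: "'a set set \<Rightarrow> (nat \<Rightarrow> 'a) \<Rightarrow> nat \<Rightarrow> 'a \<Rightarrow> 'a \<Rightarrow> 'a set \<Rightarrow> bool" where
  "walk E p n a b R \<longleftrightarrow> p 0 = a \<and> p n = b \<and> (\<forall>i<n. {p i, p (Suc i)} \<in> E) \<and>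
     (\<forall>i. 0 < i \<and> i < n \<longrightarrow> p i \<in> R)"

lemma walk_skip:
  assumes w: "walk E p n a b R" and "0 < d" "i + d \<le> n"
    and "i + d = n \<Longrightarrow> p i = b" and "i + d < n \<Longrightarrow> {p i, p (Suc (i + d))} \<in> E"
  shows "walk E (\<lambda>k. p (if k \<le> i then k else k + d)) (n - d) a b R"
  unfolding walk_def
proof (intro conjI allI impI)
  show "p (if 0 \<le> i then 0 else 0 + d) = a" using w by (simp add: walk_def)
  show "p (if n - d \<le> i then n - d else n - d + d) = b"
  proof (cases "n - d \<le> i")
    case True
    then have "i + d = n" "n - d = i" using assms(3) by auto
    then show ?thesis using assms(4) by simp
  qed (use w in \<open>auto simp: walk_def\<close>)
  fix k
  show "{p (if k \<le> i then k else k + d), p (if Suc k \<le> i then Suc k else Suc k + d)} \<in> E"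
    if "k < n - d"
    using w assms(5) that by (cases "Suc k \<le> i"; cases "k = i") (auto simp: walk_def)
  show "p (if k \<le> i then k else k + d) \<in> R" if "0 < k \<and> k < n - d"
    using w that by (auto simp: walk_def)
qed

text \<open>A chord or a repeated vertex would allow a shortcut.\<close>
lemma shortest_walk_induced_path:
  assumes w: "walk E p n a b R" and shortest: "\<And>m q. m < n \<Longrightarrow> \<not> walk E q m a b R"
  shows "induced_path E p n"
  unfolding induced_path_def
proof (intro conjI allI impI)
  show "{p i, p (Suc i)} \<in> E" if "i < n" for i using w that by (simp add: walk_def)
  fix i j
  show "{p i, p j} \<notin> E" if ij: "Suc i < j \<and> j \<le> n"
  proof
    assume "{p i, p j} \<in> E"
    then have "walk E (\<lambda>k. p (if k \<le> i then k else k + (j - i - 1))) (n - (j - i - 1)) a b R"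
      using ij by (intro walk_skip[OF w]) (auto simp: Suc_diff_Suc)
    moreover have "n - (j - i - 1) < n" using ij by linarith
    ultimately show False using shortest by blast
  qed
  have "p i \<noteq> p j" if ij: "i < j" "j \<le> n" for i j
  proof
    assume e: "p i = p j"
    have "walk E (\<lambda>k. p (if k \<le> i then k else k + (j - i))) (n - (j - i)) a b R"
    proof (rule walk_skip[OF w])
      show "0 < j - i" "i + (j - i) \<le> n" using ij by auto
      show "p i = b" if "i + (j - i) = n" using that e w ij by (simp add: walk_def)
      show "{p i, p (Suc (i + (j - i)))} \<in> E" if "i + (j - i) < n"
        using that e w ij by (simp add: walk_def)
    qed
    moreover have "n - (j - i) < n" using ij by linarith
    ultimately show False using shortest by blast
  qed
  then show "inj_on p {..n}"
    by (intro inj_onI) (metis atMost_iff linorder_neqE_nat)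
qed

lemma walk_imp_induced_path:
  assumes "walk E p n a b R"
  obtains q m where "walk E q m a b R" and "induced_path E q m"
proof -
  define m where "m = (LEAST m. \<exists>q. walk E q m a b R)"
  obtain q where "walk E q m a b R"
    using LeastI_ex[of "\<lambda>m. \<exists>q. walk E q m a b R"] assms unfolding m_def by blast
  moreover have "\<not> walk E q' m' a b R" if "m' < m" for m' q'
    using not_less_Least[of m' "\<lambda>m. \<exists>q. walk E q m a b R"] that unfolding m_def by blast
  ultimately show ?thesis
    by (intro that shortest_walk_induced_path)
qed

lemma walk_through_layers:
  assumes "0 < m" and "a \<in> S 0" and "b \<in> S m"
    and layers: "\<And>i x y. i < m \<Longrightarrow> x \<in> S i \<Longrightarrow> y \<in> S (Suc i) \<Longrightarrow> {x, y} \<in> E"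
    and inner: "\<And>i. 0 < i \<Longrightarrow> i < m \<Longrightarrow> S i \<inter> R \<noteq> {}"
  shows "\<exists>p. walk E p m a b R"
proof
  define p where "p i = (if i = 0 then a else if i = m then b else (SOME t. t \<in> S i \<inter> R))" for i
  have p_inner: "p i \<in> S i \<inter> R" if "0 < i" "i < m" for i
  proof -
    have "(SOME t. t \<in> S i \<inter> R) \<in> S i \<inter> R"
      using inner[OF that] some_in_eq by metis
    then show ?thesis using that by (simp add: p_def)
  qed
  have p_layer: "p i \<in> S i" if i: "i \<le> m" for i
  proof -
    consider "i = 0" | "i = m" | "0 < i" "i < m" using i by (metis gr0I le_neq_implies_less)
    then show ?thesis
      using assms(1-3) p_inner by cases (simp_all add: p_def)
  qed
  show "walk E p m a b R"
    unfolding walk_def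
  proof (intro conjI allI impI)
    show "p 0 = a" "p m = b" using assms(1) by (simp_all add: p_def)
    show "{p i, p (Suc i)} \<in> E" if "i < m" for i
      using layers p_layer that by simp
    show "p i \<in> R" if "0 < i \<and> i < m" for i
      using p_inner that by blast
  qed
qed

lemma induced_cycle_nthD:
  assumes "induced_cycle V E xs" and "i < length xs" "j < length xs" "i \<noteq> j"
  shows "xs ! i \<in> V" "xs ! j \<in> V" "xs ! i \<noteq> xs ! j"
proof -
  have "distinct xs" "set xs \<subseteq> V" using assms(1) by (simp_all add: induced_cycle_def)
  then show "xs ! i \<in> V" "xs ! j \<in> V" "xs ! i \<noteq> xs ! j"
    using nth_mem[OF assms(2)] nth_mem[OF assms(3)] assms(2-4) nth_eq_iff_index_eq by blast+
qed

lemma induced_cycle_adjacent_iff: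
  assumes "induced_cycle V E xs" and "i < length xs" "j < length xs" "i \<noteq> j"
  shows "{xs ! i, xs ! j} \<in> E \<longleftrightarrow> (j = Suc i mod length xs \<or> i = Suc j mod length xs)"
proof -
  have "\<forall>i<length xs. \<forall>j<length xs. i \<noteq> j \<longrightarrow>
      ({xs ! i, xs ! j} \<in> E \<longleftrightarrow> (j = Suc i mod length xs \<or> i = Suc j mod length xs))"
    using assms(1) by (simp add: induced_cycle_def)
  then show ?thesis using assms(2-4) by blast
qed

text \<open>Each inner vertex misses some y in K, but y, being adjacent to both ends of
  a shortest such walk, is adjacent to all of it.\<close>
lemma chordal_not_walk_through_non_neighbours:
  assumes "chordal V E" and "K \<subseteq> V" and "z \<in> V - K" and "x \<in> V - K" and "z \<noteq> x"
    and "{z, x} \<notin> E" and K_adj: "\<And>y. y \<in> K \<Longrightarrow> {y, z} \<in> E \<and> {y, x} \<in> E"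
  shows "\<not> walk E p n z x {t \<in> V - K. \<exists>y\<in>K. {y, t} \<notin> E}"
proof
  define R where "R = {t \<in> V - K. \<exists>y\<in>K. {y, t} \<notin> E}"
  assume "walk E p n z x {t \<in> V - K. \<exists>y\<in>K. {y, t} \<notin> E}"
  then obtain q m where "walk E q m z x R" and "induced_path E q m"
    unfolding R_def by (rule walk_imp_induced_path)
  then have "q 0 = z" "q m = x" and q_inner: "\<And>i. 0 < i \<Longrightarrow> i < m \<Longrightarrow> q i \<in> R"
    and q_edge: "\<And>i. i < m \<Longrightarrow> {q i, q (Suc i)} \<in> E"
    unfolding walk_def by auto
  have "m \<noteq> 0"
  proof
    assume "m = 0"
    then show False using \<open>q 0 = z\<close> \<open>q m = x\<close> assms(5) by simp
  qed
  then have "m \<noteq> 1" using \<open>q 0 = z\<close> \<open>q m = x\<close> q_edge[of 0] assms(6) by auto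
  then obtain y where "y \<in> K" "{y, q 1} \<notin> E"
    using q_inner[of 1] \<open>m \<noteq> 0\<close> unfolding R_def by auto
  have "q i \<in> V - K" if i: "i \<le> m" for i
  proof -
    consider "i = 0" | "i = m" | "0 < i" "i < m" using i by (metis gr0I le_neq_implies_less)
    then show ?thesis
      using q_inner \<open>q 0 = z\<close> \<open>q m = x\<close> assms(3,4) unfolding R_def by cases auto
  qed
  then have path_V: "q ` {..m} \<subseteq> V" and path_y: "y \<notin> q ` {..m}"
    using \<open>y \<in> K\<close> by auto
  have "{y, q 1} \<in> E"
  proof (rule chordal_apex_adjacent[OF assms(1) \<open>induced_path E q m\<close> path_V _ path_y])
    show "y \<in> V" using \<open>y \<in> K\<close> assms(2) by blast
    show "{y, q 0} \<in> E" "{y, q m} \<in> E" using K_adj \<open>y \<in> K\<close> \<open>q 0 = z\<close> \<open>q m = x\<close> by auto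
    show "1 \<le> m" using \<open>m \<noteq> 0\<close> by simp
  qed
  then show False using \<open>{y, q 1} \<notin> E\<close> by contradiction
qed

lemma induced_cycle_successor_twin:
  assumes cyc: "induced_cycle V E xs" and "i < length xs" and j: "j = Suc i mod length xs"
    and twin: "\<forall>k<length xs. k \<noteq> i \<longrightarrow> k \<noteq> j \<longrightarrow> ({xs ! k, xs ! i} \<in> E \<longleftrightarrow> {xs ! k, xs ! j} \<in> E)"
  shows False
proof -
  define L where "L = length xs"
  define h where "h = (if i = 0 then L - 1 else i - 1)"
  have "4 \<le> L" and adj: "\<forall>a<L. \<forall>b<L. a \<noteq> b \<longrightarrow>
      ({xs ! a, xs ! b} \<in> E \<longleftrightarrow> (b = Suc a mod L \<or> a = Suc b mod L))"
    using cyc unfolding induced_cycle_def L_def by auto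
  then have "h < L" "j < L" "h \<noteq> i" "h \<noteq> j" "i = Suc h mod L" "j \<noteq> Suc h mod L" "h \<noteq> Suc j mod L"
    using assms(2) j unfolding h_def L_def by (auto simp: mod_Suc)
  then have "{xs ! h, xs ! i} \<in> E" "{xs ! h, xs ! j} \<notin> E"
    using adj assms(2) unfolding L_def by auto
  then show False using twin \<open>h < L\<close> \<open>h \<noteq> i\<close> \<open>h \<noteq> j\<close> unfolding L_def by blast
qed

lemma induced_cycle_no_twins:
  assumes cyc: "induced_cycle V E xs" and "i < length xs" "j < length xs" "i \<noteq> j"
    and "{xs ! i, xs ! j} \<in> E"
    and twin: "\<forall>k<length xs. k \<noteq> i \<longrightarrow> k \<noteq> j \<longrightarrow> ({xs ! k, xs ! i} \<in> E \<longleftrightarrow> {xs ! k, xs ! j} \<in> E)"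
  shows False
proof -
  have "j = Suc i mod length xs \<or> i = Suc j mod length xs"
    using cyc assms(2-5) unfolding induced_cycle_def by blast
  then show False
    using induced_cycle_successor_twin[OF cyc] assms(2,3) twin by metis
qed

lemma graph_edgeD: "graph V E \<Longrightarrow> {u, v} \<in> E \<Longrightarrow> u \<in> V \<and> v \<in> V \<and> u \<noteq> v"
  unfolding graph_def by (auto simp: doubleton_eq_iff)

lemma graph_edgeE:
  assumes "graph V E" and "e \<in> E"
  obtains u v where "e = {u, v}" "u \<in> V" "v \<in> V" "u \<noteq> v"
  using assms unfolding graph_def by blast

locale clique_substitution =
  fixes V :: "'a set" and E :: "'a set set"
    and W :: "'b set" and F :: "'b set set" and C :: "'a \<Rightarrow> 'b set"
  assumes graph_V: "graph V E" and graph_W: "graph W F"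
    and nonempty: "\<forall>v\<in>V. C v \<noteq> {}"
    and cover: "\<Union> (C ` V) = W"
    and disjoint: "\<forall>u\<in>V. \<forall>v\<in>V. u \<noteq> v \<longrightarrow> C u \<inter> C v = {}"
    and clique: "\<forall>v\<in>V. \<forall>x\<in>C v. \<forall>y\<in>C v. x \<noteq> y \<longrightarrow> {x, y} \<in> F"
    and cross: "\<forall>u\<in>V. \<forall>v\<in>V. u \<noteq> v \<longrightarrow>
           (\<forall>x\<in>C u. \<forall>y\<in>C v. {x, y} \<in> F \<longleftrightarrow> {u, v} \<in> E)"
begin

definition class_of :: "'b \<Rightarrow> 'a" where
  "class_of x = (THE v. v \<in> V \<and> x \<in> C v)"

lemma class_unique: "u \<in> V \<Longrightarrow> v \<in> V \<Longrightarrow> x \<in> C u \<Longrightarrow> x \<in> C v \<Longrightarrow> u = v"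
  using disjoint by blast

lemma class_subset: "v \<in> V \<Longrightarrow> C v \<subseteq> W"
  using cover by blast

lemma class_of_eqI: "v \<in> V \<Longrightarrow> x \<in> C v \<Longrightarrow> class_of x = v"
  unfolding class_of_def using class_unique by blast

lemma class_of: "x \<in> W \<Longrightarrow> class_of x \<in> V \<and> x \<in> C (class_of x)"
  using cover class_of_eqI by blast

definition lift_edges :: "'a set set \<Rightarrow> 'b set set" where
  "lift_edges A = F \<union> {{x, y} | x y u v. {u, v} \<in> A \<and> u \<in> V \<and> v \<in> V \<and> x \<in> C u \<and> y \<in> C v}"

definition quotient_edges :: "'b set set \<Rightarrow> 'a set set" where
  "quotient_edges B = {{u, v} | u v. u \<in> V \<and> v \<in> V \<and> u \<noteq> v \<and> (\<forall>x\<in>C u. \<forall>y\<in>C v. {x, y} \<in> B)}"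

lemma F_subset_lift_edges: "F \<subseteq> lift_edges A"
  unfolding lift_edges_def by blast

lemma lift_edges_mono: "A \<subseteq> A' \<Longrightarrow> lift_edges A \<subseteq> lift_edges A'"
  unfolding lift_edges_def by blast

lemma lift_edges_iff:
  assumes "E \<subseteq> A" "u \<in> V" "v \<in> V" "u \<noteq> v" "x \<in> C u" "y \<in> C v"
  shows "{x, y} \<in> lift_edges A \<longleftrightarrow> {u, v} \<in> A"
proof
  assume "{u, v} \<in> A" then show "{x, y} \<in> lift_edges A"
    using assms unfolding lift_edges_def by blast
next
  assume "{x, y} \<in> lift_edges A"
  then consider "{x, y} \<in> F"
    | u' v' x' y' where "{x, y} = {x', y'}" "{u', v'} \<in> A" "u' \<in> V" "v' \<in> V" "x' \<in> C u'" "y' \<in> C v'"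
    unfolding lift_edges_def by blast
  then show "{u, v} \<in> A"
  proof cases
    case 1 then show ?thesis using cross assms by blast
  next
    case 2
    then have "(u = u' \<and> v = v') \<or> (u = v' \<and> v = u')"
      using class_unique assms by (metis doubleton_eq_iff)
    then show ?thesis using 2 by (auto simp: insert_commute)
  qed
qed

lemma lift_edges_iff_class:
  assumes "E \<subseteq> A" "x \<in> W" "y \<in> W" "x \<noteq> y"
  shows "{x, y} \<in> lift_edges A \<longleftrightarrow> class_of x = class_of y \<or> {class_of x, class_of y} \<in> A"
proof (cases "class_of x = class_of y")
  case True
  then have "{x, y} \<in> F" using clique class_of assms(2-4) by metis
  then show ?thesis using True F_subset_lift_edges by blast
qed (use lift_edges_iff class_of assms in blast)

lemma graph_lift_edges:
  assumes "graph V A" shows "graph W (lift_edges A)"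
proof -
  have "e \<in> {{x, y} | x y. x \<in> W \<and> y \<in> W \<and> x \<noteq> y}" if "e \<in> lift_edges A" for e
  proof -
    from that consider "e \<in> F"
      | x y u v where "e = {x, y}" "{u, v} \<in> A" "u \<in> V" "v \<in> V" "x \<in> C u" "y \<in> C v"
      unfolding lift_edges_def by blast
    then show ?thesis
    proof cases
      case 1 then show ?thesis using graph_W unfolding graph_def by blast
    next
      case 2
      then have "x \<noteq> y" using graph_edgeD[OF assms] disjoint by blast
      then show ?thesis using 2 class_subset by blast
    qed
  qed
  then show ?thesis using graph_W unfolding graph_def by blast
qed

lemma lift_edges_reflect:
  assumes "graph V A" "E \<subseteq> B" "lift_edges A \<subseteq> lift_edges B"
  shows "A \<subseteq> B"
proof
  fix e assume "e \<in> A"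
  then obtain u v where e: "e = {u, v}" "u \<in> V" "v \<in> V" "u \<noteq> v"
    using graph_edgeE[OF assms(1)] by metis
  obtain x y where "x \<in> C u" "y \<in> C v" using nonempty e by blast
  then have "{x, y} \<in> lift_edges B"
    using assms(3) \<open>e \<in> A\<close> e unfolding lift_edges_def by blast
  then show "e \<in> B" using lift_edges_iff[OF assms(2) e(2-4)] \<open>x \<in> C u\<close> \<open>y \<in> C v\<close> e(1) by simp
qed

lemma quotient_edgesI:
  "u \<in> V \<Longrightarrow> v \<in> V \<Longrightarrow> u \<noteq> v \<Longrightarrow> \<forall>x\<in>C u. \<forall>y\<in>C v. {x, y} \<in> B \<Longrightarrow> {u, v} \<in> quotient_edges B"
  unfolding quotient_edges_def by blast

lemma quotient_edgesD:
  assumes "{u, v} \<in> quotient_edges B" "x \<in> C u" "y \<in> C v"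
  shows "{x, y} \<in> B"
proof -
  obtain u' v' where "{u, v} = {u', v'}" "\<forall>x\<in>C u'. \<forall>y\<in>C v'. {x, y} \<in> B"
    using assms(1) unfolding quotient_edges_def by blast
  then show ?thesis using assms(2,3) by (auto simp: doubleton_eq_iff insert_commute)
qed

lemma quotient_edges_iff:
  assumes "u \<in> V" "v \<in> V" "u \<noteq> v"
  shows "{u, v} \<in> quotient_edges B \<longleftrightarrow> (\<forall>x\<in>C u. \<forall>y\<in>C v. {x, y} \<in> B)"
proof
  show "\<forall>x\<in>C u. \<forall>y\<in>C v. {x, y} \<in> B" if "{u, v} \<in> quotient_edges B"
    using quotient_edgesD[OF that] by blast
qed (rule quotient_edgesI[OF assms])

lemma graph_quotient_edges: "graph V (quotient_edges B)"
  using graph_V unfolding graph_def quotient_edges_def by blast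

lemma E_subset_quotient_edges:
  assumes "F \<subseteq> B" shows "E \<subseteq> quotient_edges B"
proof
  fix e assume "e \<in> E"
  then obtain u v where "e = {u, v}" "u \<in> V" "v \<in> V" "u \<noteq> v"
    using graph_edgeE[OF graph_V] by metis
  then show "e \<in> quotient_edges B" using quotient_edgesI cross assms \<open>e \<in> E\<close> by blast
qed

lemma lift_quotient_edges_subset:
  assumes "F \<subseteq> B" shows "lift_edges (quotient_edges B) \<subseteq> B"
  unfolding lift_edges_def using assms quotient_edgesD by blast

text \<open>Two vertices of an induced cycle in the same class would be adjacent twins.\<close>
lemma chordal_lift_edges:
  assumes "E \<subseteq> A" and chordal_A: "chordal V A"
  shows "chordal W (lift_edges A)"
  unfolding chordal_def
proof
  assume "\<exists>xs. induced_cycle W (lift_edges A) xs"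
  then obtain xs where cyc: "induced_cycle W (lift_edges A) xs" by blast
  then have xs: "distinct xs" "set xs \<subseteq> W" "4 \<le> length xs"
    unfolding induced_cycle_def by auto
  have edge_iff: "{xs ! i, xs ! j} \<in> lift_edges A \<longleftrightarrow>
      class_of (xs ! i) = class_of (xs ! j) \<or> {class_of (xs ! i), class_of (xs ! j)} \<in> A"
    if "i < length xs" "j < length xs" "i \<noteq> j" for i j
    using lift_edges_iff_class[OF assms(1)] xs that by (simp add: nth_eq_iff_index_eq subset_iff)
  have classes_distinct: "class_of (xs ! i) \<noteq> class_of (xs ! j)"
    if ij: "i < length xs" "j < length xs" "i \<noteq> j" for i j
  proof
    assume same: "class_of (xs ! i) = class_of (xs ! j)"
    show False
    proof (rule induced_cycle_no_twins[OF cyc ij])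
      show "{xs ! i, xs ! j} \<in> lift_edges A" using edge_iff[OF ij] same by simp
      show "\<forall>k<length xs. k \<noteq> i \<longrightarrow> k \<noteq> j \<longrightarrow>
          ({xs ! k, xs ! i} \<in> lift_edges A \<longleftrightarrow> {xs ! k, xs ! j} \<in> lift_edges A)"
        using edge_iff ij same by simp
    qed
  qed
  have "induced_cycle V A (map class_of xs)"
    unfolding induced_cycle_def
  proof (intro conjI allI impI)
    show "4 \<le> length (map class_of xs)" using xs by simp
    show "distinct (map class_of xs)"
      unfolding distinct_conv_nth using classes_distinct by simp
    show "set (map class_of xs) \<subseteq> V" using xs class_of by auto
    fix i j assume "i < length (map class_of xs)" "j < length (map class_of xs)" "i \<noteq> j"
    then show "{map class_of xs ! i, map class_of xs ! j} \<in> A \<longleftrightarrow>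
        (j = Suc i mod length (map class_of xs) \<or> i = Suc j mod length (map class_of xs))"
      using cyc edge_iff classes_distinct unfolding induced_cycle_def by auto
  qed
  then show False using chordal_A unfolding chordal_def by blast
qed

lemma induced_cycle_classes_disjoint:
  assumes "induced_cycle V A us" and "i < length us" "j < length us" "i \<noteq> j"
  shows "C (us ! i) \<inter> C (us ! j) = {}"
  using induced_cycle_nthD[OF assms] disjoint by blast

lemma induced_cycle_quotient_edges_iff:
  assumes cyc: "induced_cycle V (quotient_edges B) us" and "i < length us" "j < length us" "i \<noteq> j"
  shows "(\<forall>x\<in>C (us ! i). \<forall>y\<in>C (us ! j). {x, y} \<in> B) \<longleftrightarrow>
    (j = Suc i mod length us \<or> i = Suc j mod length us)"
  using quotient_edges_iff[OF induced_cycle_nthD[OF assms]] induced_cycle_adjacent_iff[OF assms]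
  by simp

text \<open>The inner vertices exist because us ! 1 is adjacent in the quotient to none of
  us ! 3, ..., us ! (length us - 1).\<close>
lemma walk_around_quotient_cycle:
  assumes cyc: "induced_cycle V (quotient_edges B) us" and z: "z \<in> C (us ! 2)" and x: "x \<in> C (us ! 0)"
  shows "\<exists>p. walk B p (length us - 2) z x {t \<in> W - C (us ! 1). \<exists>y\<in>C (us ! 1). {y, t} \<notin> B}"
proof (rule walk_through_layers[where S = "\<lambda>i. C (us ! ((i + 2) mod length us))"])
  define k where "k = length us"
  have "4 \<le> k" and usV: "\<And>i. i < k \<Longrightarrow> us ! i \<in> V"
    using cyc unfolding induced_cycle_def k_def by auto
  have "(0 + 2) mod k = 2" using \<open>4 \<le> k\<close> by simp
  have "k - 2 + 2 = k" using \<open>4 \<le> k\<close> by simp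
  then have "(k - 2 + 2) mod k = 0" by (simp only: mod_self)
  show "z \<in> C (us ! ((0 + 2) mod length us))" "x \<in> C (us ! ((length us - 2 + 2) mod length us))"
    using x z \<open>(0 + 2) mod k = 2\<close> \<open>(k - 2 + 2) mod k = 0\<close> unfolding k_def by (simp_all only:)
  show "0 < length us - 2" using \<open>4 \<le> k\<close> unfolding k_def by simp
  fix i
  show "{s, t} \<in> B"
    if "i < length us - 2" "s \<in> C (us ! ((i + 2) mod length us))" "t \<in> C (us ! ((Suc i + 2) mod length us))"
    for s t
  proof -
    have "i + 2 < k" using that(1) unfolding k_def by simp
    then have "i + 2 \<noteq> Suc (i + 2) mod k" "Suc (i + 2) mod k < k"
      using \<open>4 \<le> k\<close> by (auto simp: mod_Suc)
    then have "\<forall>a\<in>C (us ! (i + 2)). \<forall>b\<in>C (us ! (Suc (i + 2) mod k)). {a, b} \<in> B"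
      using induced_cycle_quotient_edges_iff[OF cyc, of "i + 2" "Suc (i + 2) mod k"] \<open>i + 2 < k\<close>
      unfolding k_def by blast
    moreover have "s \<in> C (us ! (i + 2))" "t \<in> C (us ! (Suc (i + 2) mod k))"
      using that(2,3) \<open>i + 2 < k\<close> unfolding k_def by simp_all
    ultimately show ?thesis by blast
  qed
  assume "0 < i" "i < length us - 2"
  then have "1 < k" "i + 2 < k" "1 \<noteq> i + 2" "i + 2 \<noteq> Suc 1 mod k" "1 \<noteq> Suc (i + 2) mod k"
    using \<open>4 \<le> k\<close> unfolding k_def by (auto simp: mod_Suc)
  then obtain y t where "y \<in> C (us ! 1)" and t: "t \<in> C (us ! (i + 2))" and "{y, t} \<notin> B"
    using induced_cycle_quotient_edges_iff[OF cyc, of 1 "i + 2"] unfolding k_def by blast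
  moreover have "t \<in> W - C (us ! 1)"
    using t class_subset[OF usV[of "i + 2"]] \<open>i + 2 < k\<close>
      induced_cycle_classes_disjoint[OF cyc, of 1 "i + 2"] \<open>1 < k\<close> \<open>1 \<noteq> i + 2\<close>
    unfolding k_def by blast
  moreover have "t \<in> C (us ! ((i + 2) mod length us))"
    using t \<open>i + 2 < k\<close> unfolding k_def by (simp only: mod_less)
  ultimately show "C (us ! ((i + 2) mod length us)) \<inter> {t \<in> W - C (us ! 1). \<exists>y\<in>C (us ! 1). {y, t} \<notin> B} \<noteq> {}"
    by blast
qed

lemma chordal_quotient_edges:
  assumes chordal_B: "chordal W B"
  shows "chordal V (quotient_edges B)"
  unfolding chordal_def
proof
  assume "\<exists>us. induced_cycle V (quotient_edges B) us"
  then obtain us where cyc: "induced_cycle V (quotient_edges B) us" by blast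
  then have "4 \<le> length us" and usV: "\<And>i. i < length us \<Longrightarrow> us ! i \<in> V"
    unfolding induced_cycle_def by auto
  then have in_W: "C (us ! 0) \<subseteq> W" "C (us ! 1) \<subseteq> W" "C (us ! 2) \<subseteq> W"
    by (auto intro!: class_subset usV)
  have "us \<noteq> []" "Suc 0 mod length us = 1" "Suc 1 mod length us = 2" "Suc 2 mod length us \<noteq> 0"
    using \<open>4 \<le> length us\<close> by (auto simp: mod_Suc)
  then have "\<not> (\<forall>x\<in>C (us ! 2). \<forall>y\<in>C (us ! 0). {x, y} \<in> B)"
    and K_adj: "\<forall>x\<in>C (us ! 0). \<forall>y\<in>C (us ! 1). {x, y} \<in> B" "\<forall>x\<in>C (us ! 1). \<forall>y\<in>C (us ! 2). {x, y} \<in> B"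
    using induced_cycle_quotient_edges_iff[OF cyc, of 2 0] induced_cycle_quotient_edges_iff[OF cyc, of 0 1]
      induced_cycle_quotient_edges_iff[OF cyc, of 1 2] \<open>4 \<le> length us\<close> by simp_all
  then obtain z x where z: "z \<in> C (us ! 2)" and x: "x \<in> C (us ! 0)" and "{z, x} \<notin> B" by blast
  have "z \<noteq> x"
    using z x induced_cycle_classes_disjoint[OF cyc, of 2 0] \<open>4 \<le> length us\<close> \<open>us \<noteq> []\<close> by auto
  obtain p where "walk B p (length us - 2) z x {t \<in> W - C (us ! 1). \<exists>y\<in>C (us ! 1). {y, t} \<notin> B}"
    using walk_around_quotient_cycle[OF cyc z x] by blast
  moreover have "\<not> walk B p (length us - 2) z x {t \<in> W - C (us ! 1). \<exists>y\<in>C (us ! 1). {y, t} \<notin> B}"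
  proof (rule chordal_not_walk_through_non_neighbours[OF chordal_B])
    show "C (us ! 1) \<subseteq> W" by (rule in_W)
    show "z \<in> W - C (us ! 1)" "x \<in> W - C (us ! 1)"
      using z x in_W induced_cycle_classes_disjoint[OF cyc, of 1 2]
        induced_cycle_classes_disjoint[OF cyc, of 1 0] \<open>4 \<le> length us\<close> \<open>us \<noteq> []\<close> by auto
    show "{y, z} \<in> B \<and> {y, x} \<in> B" if "y \<in> C (us ! 1)" for y
      using K_adj that z x by (auto simp: insert_commute)
  qed (use \<open>z \<noteq> x\<close> \<open>{z, x} \<notin> B\<close> in auto)
  ultimately show False by contradiction
qed

lemma chordal_completion_lift_edges:
  "chordal_completion V E A \<Longrightarrow> chordal_completion W F (lift_edges A)"
  unfolding chordal_completion_def
  using graph_lift_edges F_subset_lift_edges chordal_lift_edges by blast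

lemma chordal_completion_quotient_edges:
  "chordal_completion W F B \<Longrightarrow> chordal_completion V E (quotient_edges B)"
  unfolding chordal_completion_def
  using graph_quotient_edges E_subset_quotient_edges chordal_quotient_edges by blast

lemma lift_edges_inj_on:
  "inj_on lift_edges {A. chordal_completion V E A}"
  using lift_edges_reflect unfolding chordal_completion_def
  by (intro inj_onI) (simp add: subset_antisym)

lemma minimal_chordal_completion_lift_edges:
  assumes "minimal_chordal_completion V E A"
  shows "minimal_chordal_completion W F (lift_edges A)"
  unfolding minimal_chordal_completion_def
proof (intro conjI notI)
  have A: "chordal_completion V E A" and min_A: "\<And>A'. chordal_completion V E A' \<Longrightarrow> \<not> A' \<subset> A"
    using assms unfolding minimal_chordal_completion_def by auto
  show "chordal_completion W F (lift_edges A)" using A by (rule chordal_completion_lift_edges)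
  assume "\<exists>B. chordal_completion W F B \<and> B \<subset> lift_edges A"
  then obtain B where B: "chordal_completion W F B" and "B \<subset> lift_edges A" by blast
  have "lift_edges (quotient_edges B) \<subseteq> B"
    using B lift_quotient_edges_subset unfolding chordal_completion_def by blast
  with \<open>B \<subset> lift_edges A\<close> have "quotient_edges B \<subseteq> A"
    using lift_edges_reflect[OF graph_quotient_edges] A unfolding chordal_completion_def by blast
  then have "quotient_edges B = A"
    using min_A chordal_completion_quotient_edges[OF B] by blast
  then show False
    using \<open>lift_edges (quotient_edges B) \<subseteq> B\<close> \<open>B \<subset> lift_edges A\<close> by blast
qed

lemma minimal_chordal_completion_imp_lift_edges:
  assumes "minimal_chordal_completion W F B"
  shows "\<exists>A. minimal_chordal_completion V E A \<and> B = lift_edges A"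
proof (intro exI conjI)
  have B: "chordal_completion W F B" and min_B: "\<And>B'. chordal_completion W F B' \<Longrightarrow> \<not> B' \<subset> B"
    using assms unfolding minimal_chordal_completion_def by auto
  have A: "chordal_completion V E (quotient_edges B)"
    using chordal_completion_quotient_edges[OF B] .
  moreover have "lift_edges (quotient_edges B) \<subseteq> B"
    using B lift_quotient_edges_subset unfolding chordal_completion_def by blast
  ultimately show lift: "B = lift_edges (quotient_edges B)"
    using min_B chordal_completion_lift_edges by blast
  show "minimal_chordal_completion V E (quotient_edges B)"
    unfolding minimal_chordal_completion_def
  proof (intro conjI notI)
    show "chordal_completion V E (quotient_edges B)" by (rule A)
    assume "\<exists>A'. chordal_completion V E A' \<and> A' \<subset> quotient_edges B"
    then obtain A' where A': "chordal_completion V E A'" and "A' \<subset> quotient_edges B" by blast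
    then have "lift_edges A' = B"
      using lift_edges_mono[of A' "quotient_edges B"] lift min_B chordal_completion_lift_edges by blast
    then have "A' = quotient_edges B"
      using lift_edges_inj_on A A' lift by (auto dest: inj_onD)
    then show False using \<open>A' \<subset> quotient_edges B\<close> by blast
  qed
qed

end

theorem lemma3:
  fixes V :: "'a set" and E :: "'a set set"
    and W :: "'b set" and F :: "'b set set" and C :: "'a \<Rightarrow> 'b set"
  assumes "graph V E" and "graph W F"
    and "\<forall>v\<in>V. C v \<noteq> {}"
    and "\<Union> (C ` V) = W"
    and "\<forall>u\<in>V. \<forall>v\<in>V. u \<noteq> v \<longrightarrow> C u \<inter> C v = {}"
    and "\<forall>v\<in>V. \<forall>x\<in>C v. \<forall>y\<in>C v. x \<noteq> y \<longrightarrow> {x, y} \<in> F"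
    and "\<forall>u\<in>V. \<forall>v\<in>V. u \<noteq> v \<longrightarrow>
           (\<forall>x\<in>C u. \<forall>y\<in>C v. {x, y} \<in> F \<longleftrightarrow> {u, v} \<in> E)"
  shows "\<exists>\<phi>. bij_betw \<phi> {E'. minimal_chordal_completion V E E'}
                         {F'. minimal_chordal_completion W F F'}"
proof -
  interpret clique_substitution V E W F C
    using assms by unfold_locales
  have "inj_on lift_edges {E'. minimal_chordal_completion V E E'}"
    using lift_edges_inj_on by (rule inj_on_subset) (auto simp: minimal_chordal_completion_def)
  moreover have "lift_edges ` {E'. minimal_chordal_completion V E E'} = {F'. minimal_chordal_completion W F F'}"
    using minimal_chordal_completion_lift_edges minimal_chordal_completion_imp_lift_edges by blast
  ultimately show ?thesis
    unfolding bij_betw_def by blast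
qed

end
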